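(* For every string $s\in\Sigma^*$, $\mathcal{F}^{-1}(\mathcal{F}(s))=s$.
   Context: Let $\Sigma$ be an alphabet and let $\texttt{@},\texttt{\$}$ be two distinct symbols not in $\Sigma$. For $s\in\Sigma^*$ with $|s|=n$ let $\hat s=\texttt{@}\,s\,\texttt{\$}$ (length $n+2$, positions $1,\dots,n+2$); $\hat s[i..j)$ denotes the substring at positions $i,\dots,j-1$ (empty if $i\ge j$). The leading (resp. trailing) run of a non-empty string is its longest prefix (resp. suffix) consisting of a single repeated symbol. A bilateral token is a pair $(\sigma,p)$ with $\sigma$ a non-empty string and $p\ge 0$ an integer (split position); $\sigma[1..p]$ is its front, $\sigma[p+1..|\sigma|]$ its back; it is terminal if $p=0$. The Flashback decomposition $\mathcal{F}(s)$ is the token sequence produced as follows. Start with active span $[lo,hi)=[1,n+3)$ of $\hat s$. At a step: if $lo\ge hi$, stop. Let $\ell$ be the length of the leading run of $\hat s[lo..hi)$. If $\ell=hi-lo$, append $(\hat s[lo..hi),0)$ and stop. Otherwise let $\hat s[r..hi)$ be the trailing run of $\hat s[lo..hi)$ and $\sigma=\hat s[lo..lo+\ell)\cdot\hat s[r..hi)$; if $lo+\ell\ge r$, append $(\sigma,0)$ and stop; otherwise append $(\sigma,\ell)$ and repeat with active span $[lo+\ell,r)$. For a token sequence $T=[\tau_0,\dots,\tau_{k-1}]$ with $\tau_i=(\sigma_i,p_i)$, define $N_{k-1}=\sigma_{k-1}$ and $N_i=\sigma_i[1..p_i]\cdot N_{i+1}\cdot\sigma_i[p_i+1..|\sigma_i|]$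 for $i<k-1$; the reconstruction $\mathcal{F}^{-1}(T)$ is $N_0$ with its first and last characters removed. *)

theory Defs
  imports Main
begin

datatype 'a xsym = At | Dollar | Ch 'a

definition hat :: "'a list \<Rightarrow> 'a xsym list" where
  "hat s = At # map Ch s @ [Dollar]"

definition lead_run :: "'b list \<Rightarrow> nat" where
  "lead_run w = length (takeWhile (\<lambda>c. c = hd w) w)"

definition trail_run :: "'b list \<Rightarrow> nat" where
  "trail_run w = length (takeWhile (\<lambda>c. c = last w) (rev w))"

lemma lead_run_pos: "w \<noteq> [] \<Longrightarrow> lead_run w \<ge> 1"
  by (cases w) (auto simp: lead_run_def)

(* Flashback decomposition applied to the content of the active span
   (the active span [lo,hi) is represented by the substring \<hat>s[lo..hi)). *)
function flash :: "'b list \<Rightarrow> ('b list \<times> nat) list" where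
  "flash w =
     (if w = [] then []
      else let l = lead_run w in
        if l = length w then [(w, 0)]
        else let r = length w - trail_run w;
                 \<sigma> = take l w @ drop r w in
          if l \<ge> r then [(\<sigma>, 0)]
          else (\<sigma>, l) # flash (drop l (take r w)))"
  by pat_completeness auto
termination
proof (relation "measure length", simp)
  fix w :: "'b list" and l r
  assume "w \<noteq> []" "l = lead_run w" "\<not> r \<le> l"
  then show "(drop l (take r w), w) \<in> measure length"
    using lead_run_pos[of w] by (cases w) auto
qed

definition flashback :: "'a list \<Rightarrow> ('a xsym list \<times> nat) list" where
  "flashback s = flash (hat s)"

fun nest :: "('b list \<times> nat) list \<Rightarrow> 'b list" where
  "nest [] = []"
| "nest [(\<sigma>, p)] = \<sigma>"
| "nest ((\<sigma>, p) # T) = take p \<sigma> @ nest T @ drop p \<sigma>"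

definition flashback_inv :: "('b list \<times> nat) list \<Rightarrow> 'b list" where
  "flashback_inv T = butlast (tl (nest T))"

end

theory Submission
  imports Defs
begin

text \<open>Each token stores the leading and trailing run of the current span, and the next span is
  exactly what lies strictly between them, so nesting the reconstruction of the rest between the
  front and back of a token rebuilds the span. When the decomposition stops with
  \<open>lo + \<ell> \<ge> r\<close>, the two runs cannot overlap (an overlap would make the whole span a single
  run, which is caught one test earlier), so \<open>lo + \<ell> = r\<close> and the token is the entire span.
  Hence \<open>nest (flash w) = w\<close>, and stripping the sentinels of \<open>\<hat>s\<close> gives back \<open>s\<close>.\<close>

lemma lead_run_le_length: "lead_run w \<le> length w"
  unfolding lead_run_def by (rule length_takeWhile_le)

lemma P_nth_takeWhile: "k < length (takeWhile P xs) \<Longrightarrow> P (xs ! k)"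
  by (metis nth_mem set_takeWhileD takeWhile_nth)

lemma nth_lead_run: "k < lead_run w \<Longrightarrow> w ! k = hd w"
  unfolding lead_run_def using P_nth_takeWhile[of k "\<lambda>c. c = hd w" w] by simp

lemma nth_lead_run_neq_hd: "lead_run w < length w \<Longrightarrow> w ! lead_run w \<noteq> hd w"
  unfolding lead_run_def using nth_length_takeWhile[of "\<lambda>c. c = hd w" w] by simp

lemma nth_trail_run:
  assumes "length w - trail_run w \<le> j" and "j < length w"
  shows "w ! j = last w"
proof -
  have "trail_run w \<le> length w"
    unfolding trail_run_def by (metis length_rev length_takeWhile_le)
  then have "length w - 1 - j < length (takeWhile (\<lambda>c. c = last w) (rev w))"
    using assms unfolding trail_run_def by linarith
  then have "rev w ! (length w - 1 - j) = last w"
    using P_nth_takeWhile[of _ "\<lambda>c. c = last w" "rev w"] by simp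
  then show ?thesis
    using assms(2) by (simp add: rev_nth)
qed

lemma lead_run_le_trail_run_start:
  assumes "lead_run w < length w"
  shows "lead_run w \<le> length w - trail_run w"
proof (rule ccontr)
  let ?r = "length w - trail_run w"
  assume "\<not> lead_run w \<le> ?r"
  then have "w ! ?r = hd w" and "w ! ?r = last w" and "w ! lead_run w = last w"
    using assms by (auto intro: nth_lead_run nth_trail_run)
  then show False
    using nth_lead_run_neq_hd[OF assms] by simp
qed

lemma nest_Cons: "T \<noteq> [] \<Longrightarrow> nest ((\<sigma>, p) # T) = take p \<sigma> @ nest T @ drop p \<sigma>"
  by (cases T) auto

declare flash.simps [simp del]

lemma flash_nonempty: "w \<noteq> [] \<Longrightarrow> flash w \<noteq> []"
  by (subst flash.simps) (auto simp: Let_def)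

lemma nest_flash: "nest (flash w) = w"
proof (induction w rule: flash.induct)
  case (1 w)
  define l where "l = lead_run w"
  define r where "r = length w - trail_run w"
  consider "w = []" | "w \<noteq> []" "l = length w" | "w \<noteq> []" "l < length w" "r \<le> l"
    | "w \<noteq> []" "l < length w" "l < r"
    using lead_run_le_length[of w] unfolding l_def by linarith
  then show ?case
  proof cases
    case 1
    then show ?thesis by (subst flash.simps) simp
  next
    case 2
    then show ?thesis by (subst flash.simps) (simp add: l_def)
  next
    case 3
    then have "r = l"
      using lead_run_le_trail_run_start[of w] unfolding l_def r_def by simp
    with 3 show ?thesis
      by (subst flash.simps) (simp add: Let_def l_def [symmetric] r_def [symmetric])
  next
    case 4
    let ?mid = "drop l (take r w)"
    have "r \<le> length w" and "?mid \<noteq> []"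
      using 4 unfolding r_def by auto
    have flash_w: "flash w = (take l w @ drop r w, l) # flash ?mid"
      using 4 by (subst flash.simps) (simp add: Let_def l_def [symmetric] r_def [symmetric])
    have "nest (flash ?mid) = ?mid"
      using "1.IH" 4 unfolding l_def r_def by (simp add: Let_def)
    then have "nest (flash w) = take l w @ ?mid @ drop r w"
      using 4 by (simp add: flash_w nest_Cons flash_nonempty[OF \<open>?mid \<noteq> []\<close>])
    also have "\<dots> = w"
      using \<open>l < r\<close> \<open>r \<le> length w\<close>
      by (metis append.assoc append_take_drop_id take_take min_absorb1 less_imp_le)
    finally show ?thesis .
  qed
qed

theorem theorem4p2:
  fixes s :: "'a list"
  shows "flashback_inv (flashback s) = map Ch s"
  unfolding flashback_inv_def flashback_def by (simp add: nest_flash hat_def)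

end
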